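(* Let $L>0$, $h>0$ and let $\hat \varphi:\mathbb{R}\to\mathbb{R}$ be any function. Suppose real sequences $(v_{L,k})$, $(i_{L,k})$, $(v_{M,k})$, $(i_{M,k})$, $(q_{M,k})$, $k=0,1,2,\dots$, satisfy for all $k$: $$v_{L,k}=L\frac{i_{L,k+1}-i_{L,k}}{h},\quad v_{M,k}=\frac{\hat \varphi(q_{M,k+1})-\hat \varphi(q_{M,k})}{h},\quad q_{M,k+1}=q_{M,k}+hi_{M,k},$$ $$v_{L,k}+v_{M,k}=0,\qquad i_{L,k}=i_{M,k}.$$ Then: 1) $(i_{L,k},q_{M,k})$ is an orbit of the two-dimensional map $$i_{L,k+1}=i_{L,k}-\tfrac{1}{L}\big(\hat \varphi(q_{M,k}+hi_{L,k})-\hat \varphi(q_{M,k})\big),\qquad q_{M,k+1}=q_{M,k}+hi_{L,k}.$$ 2) For any step size $h>0$, the function $\Theta_{ML}(i_L,q_M)=Li_L+\hat\varphi(q_M)$ is a first integral of this map, i.e. $\Theta_{ML}(i_{L,k+1},q_{M,k+1})=\Theta_{ML}(i_{L,k},q_{M,k})$ for all $k\ge0$ along every orbit. 3) Consequently $\mathbb{R}^2$ is foliated into the invariant sets $\mathcal{M}_{ML}(\Phi_0)=\{(i_L,q_M)\in\mathbb{R}^2: Li_L+\hat\varphi(q_M)=\Phi_0\}$, $\Phi_0\in\mathbb{R}$, and along any orbit of the map lying in $\mathcal{M}_{ML}(\Phi_0)$ the variable $q_{M,k}$ obeys the one-dimensional map $$q_{M,k+1}=q_{M,k}-\frac{h}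{L}\hat\varphi(q_{M,k})+\frac{h}{L}\Phi_0.$$
   Context: These equations model a discrete-time circuit of a linear inductor (inductance $L$, voltage $v_L$, current $i_L$) connected to an ideal charge-controlled memristor with constitutive relation $\varphi_M=\hat\varphi(q_M)$ (voltage $v_M$, current $i_M$, charge $q_M$), discretized with step size $h$; the last two equations are Kirchhoff's voltage and current laws. *)

theory Defs
  imports Complex_Main
begin

definition LM_map :: "real \<Rightarrow> real \<Rightarrow> (real \<Rightarrow> real) \<Rightarrow> real \<times> real \<Rightarrow> real \<times> real" where
  "LM_map L h phi p = (fst p - (phi (snd p + h * fst p) - phi (snd p)) / L, snd p + h * fst p)"

definition Theta_ML :: "real \<Rightarrow> (real \<Rightarrow> real) \<Rightarrow> real \<times> real \<Rightarrow> real" where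
  "Theta_ML L phi p = L * fst p + phi (snd p)"

definition M_ML :: "real \<Rightarrow> (real \<Rightarrow> real) \<Rightarrow> real \<Rightarrow> (real \<times> real) set" where
  "M_ML L phi Phi0 = {(i, q). L * i + phi q = Phi0}"

end

theory Submission
  imports Defs
begin

text \<open>Eliminating the voltages with Kirchhoff's laws leaves
  L (i' - i) + phi q' - phi q = 0 and q' = q + h i, which is the map. The first identity says
  that L i + phi q is conserved exactly, for every step size, so each level set of Theta_ML is
  invariant; on the level Phi0 one solves i = (Phi0 - phi q) / L and substitutes it into the
  charge update.\<close>

lemma M_ML_iff_Theta_ML: "p \<in> M_ML L phi Phi0 \<longleftrightarrow> Theta_ML L phi p = Phi0"
  by (cases p) (simp add: M_ML_def Theta_ML_def)

lemma Theta_ML_LM_map: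
  assumes "L \<noteq> 0"
  shows "Theta_ML L phi (LM_map L h phi p) = Theta_ML L phi p"
  using assms by (simp add: LM_map_def Theta_ML_def field_simps)

lemma LM_map_preserves_M_ML:
  assumes "L \<noteq> 0" and "p \<in> M_ML L phi Phi0"
  shows "LM_map L h phi p \<in> M_ML L phi Phi0"
  using assms by (simp add: M_ML_iff_Theta_ML Theta_ML_LM_map)

lemma snd_LM_map_on_M_ML:
  assumes "L \<noteq> 0" and "p \<in> M_ML L phi Phi0"
  shows "snd (LM_map L h phi p) = snd p - h / L * phi (snd p) + h / L * Phi0"
proof -
  have "fst p = (Phi0 - phi (snd p)) / L"
    using assms by (simp add: M_ML_iff_Theta_ML Theta_ML_def field_simps)
  then show ?thesis
    by (simp add: LM_map_def diff_divide_distrib right_diff_distrib)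
qed

lemma circuit_step_is_LM_map:
  fixes L h :: real
  assumes "L \<noteq> 0" and "h \<noteq> 0"
    and "vL = L * (iL' - iL) / h"
    and "vM = (phi qM' - phi qM) / h"
    and "qM' = qM + h * iL"
    and "vL + vM = 0"
  shows "(iL', qM') = LM_map L h phi (iL, qM)"
proof -
  have "L * (iL' - iL) + (phi qM' - phi qM) = 0"
    using assms(2-4,6) by (simp add: add_divide_distrib[symmetric])
  then have "iL' = iL - (phi qM' - phi qM) / L"
    using assms(1) by (simp add: field_simps)
  with assms(5) show ?thesis
    by (simp add: LM_map_def)
qed

theorem proposition2:
  fixes L h :: real and phi :: "real \<Rightarrow> real"
    and vL iL vM iM qM :: "nat \<Rightarrow> real"
  assumes L_pos: "L > 0" and h_pos: "h > 0"
    and eqL: "\<And>k. vL k = L * (iL (Suc k) - iL k) / h"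
    and eqM: "\<And>k. vM k = (phi (qM (Suc k)) - phi (qM k)) / h"
    and eqq: "\<And>k. qM (Suc k) = qM k + h * iM k"
    and KVL: "\<And>k. vL k + vM k = 0"
    and KCL: "\<And>k. iL k = iM k"
  shows "(\<forall>k. (iL (Suc k), qM (Suc k)) = LM_map L h phi (iL k, qM k))
    \<and> (\<forall>x :: nat \<Rightarrow> real \<times> real. (\<forall>k. x (Suc k) = LM_map L h phi (x k)) \<longrightarrow>
          (\<forall>k. Theta_ML L phi (x (Suc k)) = Theta_ML L phi (x k)))
    \<and> (\<forall>p :: real \<times> real. \<exists>!Phi0. p \<in> M_ML L phi Phi0)
    \<and> (\<forall>Phi0 p. p \<in> M_ML L phi Phi0 \<longrightarrow> LM_map L h phi p \<in> M_ML L phi Phi0)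
    \<and> (\<forall>Phi0 (x :: nat \<Rightarrow> real \<times> real).
          (\<forall>k. x (Suc k) = LM_map L h phi (x k)) \<and> (\<forall>k. x k \<in> M_ML L phi Phi0) \<longrightarrow>
          (\<forall>k. snd (x (Suc k)) = snd (x k) - h / L * phi (snd (x k)) + h / L * Phi0))"
proof -
  have L: "L \<noteq> 0" and h: "h \<noteq> 0"
    using L_pos h_pos by auto
  have "(iL (Suc k), qM (Suc k)) = LM_map L h phi (iL k, qM k)" for k
    using circuit_step_is_LM_map[where phi = phi, OF L h eqL eqM _ KVL] eqq KCL by simp
  moreover have "\<exists>!Phi0. p \<in> M_ML L phi Phi0" for p
    by (simp add: M_ML_iff_Theta_ML)
  ultimately show ?thesis
    using Theta_ML_LM_map[OF L] LM_map_preserves_M_ML[OF L] snd_LM_map_on_M_ML[OF L]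
    by simp
qed

end
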